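(* Let $q$ be a nonzero scalar and let $\mathcal A$ be an associative unital algebra over a field containing $q$, with elements $\psi,\chi$ and an invertible element $\Phi$ (standing for $q^{\phi/2}$) satisfying $$\Phi\psi=q\,\psi\Phi,\qquad \Phi\chi=q\,\chi\Phi,\qquad \psi\chi=\chi\psi.$$ Set $B=\Phi+\psi\Phi^{-1}\chi$ (standing for $q^{\beta/2}$) and assume $B$ is invertible; define $$\alpha=\Phi^{-1}\chi\Phi^{-1}\big(1+\psi\Phi^{-1}\chi\Phi^{-1}\big)^{-1},\qquad \gamma=\big(1+\Phi^{-1}\psi\Phi^{-1}\chi\big)^{-1}\Phi^{-1}\psi\Phi^{-1}$$ (so that $\alpha=\Phi^{-1}\chi B^{-1}$ and $\gamma=B^{-1}\psi\Phi^{-1}$, i.e. $B\gamma=\psi\Phi^{-1}$ and $\alpha B=\Phi^{-1}\chi$). Then $$\alpha B\gamma+B^{-1}=\Phi^{-1},$$ and $$B^2\alpha=q^2\alpha B^2,\qquad B^2\gamma=q^2\gamma B^2,\qquad \alpha\gamma=\gamma\alpha.$$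
   Context: Interpretation: these formulas equate, in the fundamental representation of $SL_q(2)$, the matrices $\begin{pmatrix} q^{\phi/2}+\psi q^{-\phi/2}\chi & \psi q^{-\phi/2}\\ q^{-\phi/2}\chi & q^{-\phi/2}\end{pmatrix}$ and $\begin{pmatrix} q^{\beta/2} & q^{\beta/2}\gamma\\ \alpha q^{\beta/2} & \alpha q^{\beta/2}\gamma+q^{-\beta/2}\end{pmatrix}$; here $\Phi=q^{\phi/2}$, $B=q^{\beta/2}$, and $B^2=q^{\beta}$. The relation $\Phi\psi=q\psi\Phi$ is the square-root form of $q^{\phi}\psi=q^2\psi q^{\phi}$. *)

theory Defs
  imports Main "HOL.Modules"
begin

definition algebra_over :: "('k::field \<Rightarrow> 'a::ring_1 \<Rightarrow> 'a) \<Rightarrow> bool" where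
  "algebra_over scale \<longleftrightarrow> module scale \<and>
     (\<forall>c x y. scale c (x * y) = scale c x * y) \<and>
     (\<forall>c x y. scale c (x * y) = x * scale c y)"

definition invertible_el :: "'a::ring_1 \<Rightarrow> bool" where
  "invertible_el x \<longleftrightarrow> (\<exists>y. x * y = 1 \<and> y * x = 1)"

text \<open>Two-sided inverse in a ring (meaningful when the element is invertible).\<close>
definition inv_el :: "'a::ring_1 \<Rightarrow> 'a" where
  "inv_el x = (THE y. x * y = 1 \<and> y * x = 1)"

end

theory Submission
  imports Defs
begin

text \<open>With \<open>Q = q \<cdot> 1\<close> central, every hypothesis and every conclusion is a
q-commutation \<open>x y = Q y x\<close>, a relation stable under sums, under multiplying by
commuting factors, under inverses and under powers. Put \<open>s = \<psi>\<Phi>\<^sup>-\<^sup>1\<close> and \<open>c = \<Phi>\<^sup>-\<^sup>1\<chi>\<close>. Then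
\<open>B = \<Phi> + s\<chi> = \<Phi> + \<psi>c\<close>, so both \<open>s\<close> and \<open>c\<close> q-commute with \<open>B\<close>, and one checks
\<open>cs = sc\<close>. Since \<open>\<alpha> = cB\<^sup>-\<^sup>1\<close> and \<open>\<gamma> = B\<^sup>-\<^sup>1s\<close>, they too q-commute with \<open>B\<close>, which
squared gives the \<open>q\<^sup>2\<close>-relations; \<open>\<alpha>\<gamma> = \<gamma>\<alpha>\<close> follows from \<open>cs = sc\<close> by moving both
factors \<open>B\<^sup>-\<^sup>1\<close> to the left; and \<open>B(\<alpha>B\<gamma> + B\<^sup>-\<^sup>1) = Qcs + 1 = 1 + s\<chi>\<Phi>\<^sup>-\<^sup>1 = B\<Phi>\<^sup>-\<^sup>1\<close>.\<close>

definition q_commutes :: "'a::ring_1 \<Rightarrow> 'a \<Rightarrow> 'a \<Rightarrow> bool" where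
  "q_commutes Q x y \<longleftrightarrow> x * y = Q * (y * x)"

lemma inv_el_unique:
  fixes x :: "'a::ring_1"
  assumes "x * y = 1" and "y * x = 1"
  shows "inv_el x = y"
  unfolding inv_el_def
proof (rule the_equality)
  show "x * y = 1 \<and> y * x = 1" using assms ..
  fix z assume "x * z = 1 \<and> z * x = 1"
  then have "z = (y * x) * z" and "x * z = 1" using assms by simp_all
  then show "z = y" by (simp add: mult.assoc)
qed

lemma
  fixes x :: "'a::ring_1"
  assumes "invertible_el x"
  shows right_inverse_el: "x * inv_el x = 1" and left_inverse_el: "inv_el x * x = 1"
proof -
  obtain y where "x * y = 1" "y * x = 1" using assms unfolding invertible_el_def by blast
  then show "x * inv_el x = 1" "inv_el x * x = 1" by (simp_all add: inv_el_unique)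
qed

lemma inv_el_one_plus_right:
  fixes P y :: "'a::ring_1"
  assumes "invertible_el P" and "invertible_el (P + y)"
  shows "inv_el (1 + y * inv_el P) = P * inv_el (P + y)"
proof (rule inv_el_unique)
  have split: "1 + y * inv_el P = (P + y) * inv_el P"
    using assms(1) by (simp add: distrib_right right_inverse_el)
  show "(1 + y * inv_el P) * (P * inv_el (P + y)) = 1"
    unfolding split using assms
    by (simp add: mult.assoc left_inverse_el right_inverse_el flip: mult.assoc[of "inv_el P"])
  show "P * inv_el (P + y) * (1 + y * inv_el P) = 1"
    unfolding split using assms
    by (simp add: mult.assoc left_inverse_el right_inverse_el flip: mult.assoc[of "inv_el (P + y)"])
qed

lemma inv_el_one_plus_left:
  fixes P y :: "'a::ring_1"
  assumes "invertible_el P" and "invertible_el (P + y)"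
  shows "inv_el (1 + inv_el P * y) = inv_el (P + y) * P"
proof (rule inv_el_unique)
  have split: "1 + inv_el P * y = inv_el P * (P + y)"
    using assms(1) by (simp add: distrib_left left_inverse_el)
  show "(1 + inv_el P * y) * (inv_el (P + y) * P) = 1"
    unfolding split using assms
    by (simp add: mult.assoc left_inverse_el right_inverse_el flip: mult.assoc[of "P + y"])
  show "inv_el (P + y) * P * (1 + inv_el P * y) = 1"
    unfolding split using assms
    by (simp add: mult.assoc left_inverse_el right_inverse_el flip: mult.assoc[of P])
qed

lemma algebra_over_scale_eq_mult:
  assumes "algebra_over scale"
  shows "scale c x = scale c 1 * x"
  using assms unfolding algebra_over_def by (metis mult_1_left)

lemma algebra_over_scale_one_central:
  assumes "algebra_over scale"
  shows "scale c 1 * x = x * scale c 1"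
  using assms unfolding algebra_over_def by (metis mult_1_left mult_1_right)

lemma algebra_over_scale_power:
  assumes "algebra_over scale"
  shows "scale (c ^ n) x = scale c 1 ^ n * x"
proof (induction n arbitrary: x)
  case 0
  have "module scale" using assms unfolding algebra_over_def by blast
  then show ?case by (simp add: module.scale_one)
next
  case (Suc n)
  have "module scale" using assms unfolding algebra_over_def by blast
  then have "scale (c ^ Suc n) x = scale c (scale (c ^ n) x)" by (simp add: module.scale_scale)
  also have "\<dots> = scale c 1 * (scale c 1 ^ n * x)"
    using Suc algebra_over_scale_eq_mult[OF assms, of c "scale c 1 ^ n * x"] by simp
  finally show ?case by (simp add: mult.assoc)
qed

lemma q_commutes_add:
  "q_commutes Q x z \<Longrightarrow> q_commutes Q y z \<Longrightarrow> q_commutes Q (x + y) z"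
  by (simp add: q_commutes_def distrib_left distrib_right)

context
  fixes Q :: "'a::ring_1"
  assumes Q_central: "\<And>x. Q * x = x * Q"
begin

lemma central_left_commute: "x * (Q * y) = Q * (x * y)"
  by (simp only: Q_central[of x] flip: mult.assoc)

lemma q_commutes_mult_left:
  assumes "w * z = z * w" and "q_commutes Q x z"
  shows "q_commutes Q (w * x) z"
proof -
  have "w * x * z = Q * (w * z * x)"
    using assms(2) unfolding q_commutes_def by (simp add: mult.assoc central_left_commute)
  then show ?thesis unfolding q_commutes_def by (simp add: assms(1) mult.assoc)
qed

lemma q_commutes_mult_right:
  assumes "q_commutes Q x z" and "w * z = z * w"
  shows "q_commutes Q (x * w) z"
proof -
  have "x * w * z = Q * (z * x) * w"
    using assms unfolding q_commutes_def by (metis mult.assoc)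
  then show ?thesis unfolding q_commutes_def by (simp add: mult.assoc)
qed

lemma q_commutes_mult_left2:
  assumes "x * w = w * x" and "q_commutes Q x y"
  shows "q_commutes Q x (w * y)"
proof -
  have "x * (w * y) = w * (Q * (y * x))"
    using assms unfolding q_commutes_def by (metis mult.assoc)
  then show ?thesis unfolding q_commutes_def by (simp add: mult.assoc central_left_commute)
qed

lemma q_commutes_mult_right2:
  assumes "q_commutes Q x y" and "x * w = w * x"
  shows "q_commutes Q x (y * w)"
proof -
  have "x * (y * w) = Q * (y * (w * x))"
    using assms unfolding q_commutes_def by (metis mult.assoc)
  then show ?thesis unfolding q_commutes_def by (simp add: mult.assoc)
qed

lemma q_commutes_inverse:
  assumes "P * P' = 1" and "P' * P = 1" and "q_commutes Q P y"
  shows "q_commutes Q y P'"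
proof -
  have "y * P' = P' * (P * y) * P'" using assms(2) by (simp flip: mult.assoc)
  also have "\<dots> = Q * (P' * y)"
    using assms(1,3) unfolding q_commutes_def by (simp add: mult.assoc central_left_commute)
  finally show ?thesis unfolding q_commutes_def .
qed

lemma q_commutes_power:
  assumes "q_commutes Q x y"
  shows "q_commutes (Q ^ n) (x ^ n) y"
proof (induction n)
  case 0
  then show ?case by (simp add: q_commutes_def)
next
  case (Suc n)
  have Qn_central: "Q ^ n * z = z * Q ^ n" for z
    by (rule power_commuting_commutes) (rule Q_central)
  have "x ^ Suc n * y = x * (Q ^ n * (y * x ^ n))"
    using Suc unfolding q_commutes_def by (simp add: mult.assoc)
  also have "\<dots> = Q ^ n * ((x * y) * x ^ n)"
    by (simp only: Qn_central mult.assoc)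
  also have "\<dots> = Q ^ Suc n * (y * x ^ Suc n)"
    using assms unfolding q_commutes_def by (simp add: mult.assoc central_left_commute)
  finally show ?case unfolding q_commutes_def .
qed

lemma q_commutes_inverse_mult_commute:
  assumes B_inverse: "B * B' = 1" "B' * B = 1"
    and "q_commutes Q B x" and "q_commutes Q B y" and "x * y = y * x"
  shows "(x * B') * (B' * y) = (B' * y) * (x * B')"
proof -
  have x: "x * B' = Q * (B' * x)" and y: "y * B' = Q * (B' * y)"
    using q_commutes_inverse[OF B_inverse] assms(3,4) unfolding q_commutes_def by blast+
  have x': "x * (B' * z) = Q * (B' * (x * z))" and y': "y * (B' * z) = Q * (B' * (y * z))" for z
    by (simp_all only: x y flip: mult.assoc)
  show ?thesis
    by (simp add: mult.assoc x x' y' central_left_commute[of B'] central_left_commute[of y] assms(5))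
qed

lemma q_sl2_relations:
  fixes \<psi> \<chi> \<Phi> :: 'a
  assumes \<Phi>: "invertible_el \<Phi>"
    and \<Phi>\<psi>: "q_commutes Q \<Phi> \<psi>" and \<Phi>\<chi>: "q_commutes Q \<Phi> \<chi>" and \<psi>\<chi>: "\<psi> * \<chi> = \<chi> * \<psi>"
  defines "B \<equiv> \<Phi> + \<psi> * inv_el \<Phi> * \<chi>"
  assumes B: "invertible_el B"
  defines "\<alpha> \<equiv> inv_el \<Phi> * \<chi> * inv_el B" and "\<gamma> \<equiv> inv_el B * \<psi> * inv_el \<Phi>"
  shows "\<alpha> * B * \<gamma> + inv_el B = inv_el \<Phi>"
    and "q_commutes Q B \<alpha>" and "q_commutes Q B \<gamma>" and "\<alpha> * \<gamma> = \<gamma> * \<alpha>"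
proof -
  define \<Phi>' B' where "\<Phi>' = inv_el \<Phi>" and "B' = inv_el B"
  define s c where "s = \<psi> * \<Phi>'" and "c = \<Phi>' * \<chi>"
  have \<Phi>\<Phi>': "\<Phi> * \<Phi>' = 1" "\<Phi>' * \<Phi> = 1"
    using \<Phi> unfolding \<Phi>'_def by (simp_all add: right_inverse_el left_inverse_el)
  have BB': "B * B' = 1" "B' * B = 1"
    using B unfolding B'_def by (simp_all add: right_inverse_el left_inverse_el)
  have BB'_cancel: "B * (B' * z) = z" "B' * (B * z) = z" for z
    by (simp_all add: BB' flip: mult.assoc)
  have \<psi>\<Phi>': "q_commutes Q \<psi> \<Phi>'" and \<chi>\<Phi>': "q_commutes Q \<chi> \<Phi>'"
    using q_commutes_inverse[OF \<Phi>\<Phi>'] \<Phi>\<psi> \<Phi>\<chi> by blast+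
  have \<Phi>s: "q_commutes Q \<Phi> s"
    unfolding s_def using \<Phi>\<psi> by (rule q_commutes_mult_right2) (simp add: \<Phi>\<Phi>')
  have \<Phi>c: "q_commutes Q \<Phi> c"
    unfolding c_def by (rule q_commutes_mult_left2) (simp_all add: \<Phi>\<Phi>' \<Phi>\<chi>)
  have \<chi>s: "q_commutes Q \<chi> s"
    unfolding s_def using \<psi>\<chi>[symmetric] \<chi>\<Phi>' by (rule q_commutes_mult_left2)
  have \<psi>c: "q_commutes Q \<psi> c"
    unfolding c_def using \<psi>\<Phi>' \<psi>\<chi> by (rule q_commutes_mult_right2)
  have Bs: "q_commutes Q B s"
  proof -
    have "B = \<Phi> + s * \<chi>" unfolding B_def s_def \<Phi>'_def ..
    then show ?thesis using \<Phi>s q_commutes_mult_left[OF refl \<chi>s] by (simp add: q_commutes_add)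
  qed
  have Bc: "q_commutes Q B c"
  proof -
    have "B = \<Phi> + \<psi> * c" unfolding B_def c_def \<Phi>'_def by (simp add: mult.assoc)
    then show ?thesis using \<Phi>c q_commutes_mult_right[OF \<psi>c refl] by (simp add: q_commutes_add)
  qed
  have cs: "c * s = s * c"
  proof -
    have "c * s = \<Phi>' * (\<chi> * \<psi>) * \<Phi>'" unfolding c_def s_def by (simp add: mult.assoc)
    also have "\<dots> = \<Phi>' * (\<psi> * (\<chi> * \<Phi>'))" by (simp only: \<psi>\<chi>[symmetric] mult.assoc)
    also have "\<dots> = Q * (\<Phi>' * \<psi> * \<Phi>' * \<chi>)"
      using \<chi>\<Phi>' unfolding q_commutes_def by (simp add: mult.assoc central_left_commute)
    also have "\<dots> = s * c"
      using \<psi>\<Phi>' unfolding q_commutes_def s_def c_def by (simp only: flip: mult.assoc)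
    finally show ?thesis .
  qed
  have \<alpha>: "\<alpha> = c * B'" and \<gamma>: "\<gamma> = B' * s"
    unfolding \<alpha>_def \<gamma>_def c_def s_def \<Phi>'_def B'_def by (simp_all add: mult.assoc)
  show "q_commutes Q B \<alpha>" unfolding \<alpha> using Bc by (rule q_commutes_mult_right2) (simp add: BB')
  show "q_commutes Q B \<gamma>" unfolding \<gamma> by (rule q_commutes_mult_left2) (simp_all add: BB' Bs)
  show "\<alpha> * \<gamma> = \<gamma> * \<alpha>"
    unfolding \<alpha> \<gamma> using BB' Bc Bs cs by (rule q_commutes_inverse_mult_commute)
  have "B * (\<alpha> * B * \<gamma> + B') = B * \<Phi>'"
  proof -
    have Bc_assoc: "B * (c * z) = Q * (c * (B * z))" for z
      using Bc unfolding q_commutes_def by (simp only: flip: mult.assoc)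
    have "B * (\<alpha> * B * \<gamma> + B') = B * (c * (B' * s)) + 1"
      unfolding \<alpha> \<gamma> by (simp add: distrib_left mult.assoc BB' BB'_cancel)
    also have "\<dots> = 1 + Q * (c * s)"
      by (simp add: Bc_assoc BB'_cancel)
    also have "\<dots> = 1 + s * (\<chi> * \<Phi>')"
      using \<chi>\<Phi>' cs unfolding q_commutes_def by (simp add: central_left_commute[of s] flip: c_def)
    also have "\<dots> = B * \<Phi>'"
      unfolding B_def s_def \<Phi>'_def using \<Phi>\<Phi>' by (simp add: distrib_right mult.assoc \<Phi>'_def)
    finally show ?thesis .
  qed
  then have "B' * (B * (\<alpha> * B * \<gamma> + B')) = B' * (B * \<Phi>')" by simp
  then have "\<alpha> * B * \<gamma> + B' = \<Phi>'" by (simp only: BB'_cancel)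
  then show "\<alpha> * B * \<gamma> + inv_el B = inv_el \<Phi>" unfolding \<Phi>'_def B'_def .
qed

end

theorem mainTheorem2:
  fixes scale :: "'k::field \<Rightarrow> 'a::ring_1 \<Rightarrow> 'a"
    and q :: 'k and \<psi> \<chi> \<Phi> :: 'a
  assumes alg: "algebra_over scale"
    and q: "q \<noteq> 0"
    and Phi_inv: "invertible_el \<Phi>"
    and r1: "\<Phi> * \<psi> = scale q (\<psi> * \<Phi>)"
    and r2: "\<Phi> * \<chi> = scale q (\<chi> * \<Phi>)"
    and r3: "\<psi> * \<chi> = \<chi> * \<psi>"
    and B_inv: "invertible_el (\<Phi> + \<psi> * inv_el \<Phi> * \<chi>)"
  shows "let B = \<Phi> + \<psi> * inv_el \<Phi> * \<chi>;
             \<alpha> = inv_el \<Phi> * \<chi> * inv_el \<Phi> * inv_el (1 + \<psi> * inv_el \<Phi> * \<chi> * inv_el \<Phi>);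
             \<gamma> = inv_el (1 + inv_el \<Phi> * \<psi> * inv_el \<Phi> * \<chi>) * inv_el \<Phi> * \<psi> * inv_el \<Phi>
         in \<alpha> * B * \<gamma> + inv_el B = inv_el \<Phi>
          \<and> B^2 * \<alpha> = scale (q^2) (\<alpha> * B^2)
          \<and> B^2 * \<gamma> = scale (q^2) (\<gamma> * B^2)
          \<and> \<alpha> * \<gamma> = \<gamma> * \<alpha>"
proof -
  define Q where "Q = scale q 1"
  define B where "B = \<Phi> + \<psi> * inv_el \<Phi> * \<chi>"
  have Q_central: "Q * x = x * Q" for x
    unfolding Q_def by (rule algebra_over_scale_one_central[OF alg])
  have scale_q: "scale q x = Q * x" and scale_q2: "scale (q^2) x = Q^2 * x" for x
    unfolding Q_def by (rule algebra_over_scale_eq_mult[OF alg], rule algebra_over_scale_power[OF alg])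
  have \<Phi>\<psi>: "q_commutes Q \<Phi> \<psi>" and \<Phi>\<chi>: "q_commutes Q \<Phi> \<chi>"
    using r1 r2 unfolding q_commutes_def scale_q .
  have \<Phi>_cancel: "inv_el \<Phi> * (\<Phi> * z) = z" "\<Phi> * (inv_el \<Phi> * z) = z" for z
    using Phi_inv by (simp_all add: left_inverse_el right_inverse_el flip: mult.assoc)
  have \<alpha>: "inv_el \<Phi> * \<chi> * inv_el \<Phi> * inv_el (1 + \<psi> * inv_el \<Phi> * \<chi> * inv_el \<Phi>)
      = inv_el \<Phi> * \<chi> * inv_el B"
    using inv_el_one_plus_right[OF Phi_inv B_inv] unfolding B_def by (simp add: mult.assoc \<Phi>_cancel)
  have \<gamma>: "inv_el (1 + inv_el \<Phi> * \<psi> * inv_el \<Phi> * \<chi>) * inv_el \<Phi> * \<psi> * inv_el \<Phi>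
      = inv_el B * \<psi> * inv_el \<Phi>"
    using inv_el_one_plus_left[OF Phi_inv B_inv] unfolding B_def by (simp add: mult.assoc \<Phi>_cancel)
  note relations = q_sl2_relations[OF Q_central Phi_inv \<Phi>\<psi> \<Phi>\<chi> r3 B_inv, folded B_def]
  show ?thesis
    unfolding Let_def B_def[symmetric] \<alpha> \<gamma> scale_q2
    using relations(1,4) q_commutes_power[OF Q_central relations(2), of 2]
      q_commutes_power[OF Q_central relations(3), of 2]
    unfolding q_commutes_def by blast
qed

end
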